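(* Let $G_B=(V_B,E_B)$ be a graph with $n=|V_B|$ even and $m=|E_B|$, let $h\geq 0$ be an integer, and let $G=(V,E)$ be the graph constructed from $G_B$ as described in the context. Then there exists a partition of $V_B$ into two sets $V_{B,1},V_{B,2}$ with $|V_{B,1}|=|V_{B,2}|$ such that at most $h$ edges of $G_B$ have one endpoint in $V_{B,1}$ and the other in $V_{B,2}$ if and only if there exists a feasible solution of 2-Overlapping Densest Subgraphs on $G$ with $\alpha=2/3$ of total density at least $\frac{2n^2-n+m-h}{\frac{3}{2}n}$.
   Context: Construction: $G$ consists of a clique $G_c=(V_c,E_c)$ on $n$ new vertices together with a copy of $G_B$, and every vertex of $V_B$ is joined by an edge to every vertex of $V_c$; so $V=V_c\cup V_B$, $|V|=2n$. A subgraph means an induced subgraph $G[U]$ for nonempty $U$; density of a graph with vertex set $V'$ and edge set $E'$ is $|E'|/|V'|$. A feasible solution of 2-Overlapping Densest Subgraphs with parameter $\alpha=2/3$ is a pair of subgraphs $G[V_1],G[V_2]$ with $V_1\neq V_2$, $|V_1\cap V_2|\leq \frac{2}{3}|V_1|$ and $|V_1\cap V_2|\leq\frac{2}{3}|V_2|$; its total density is $\mathrm{density}(G[V_1])+\mathrm{density}(G[V_2])$. *)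

theory Defs
  imports Main "HOL-Library.Disjoint_Sets" Complex_Main
begin

definition simple_graph :: "'v set \<Rightarrow> 'v set set \<Rightarrow> bool" where
  "simple_graph V E \<longleftrightarrow> finite V \<and> (\<forall>e\<in>E. \<exists>u v. u \<in> V \<and> v \<in> V \<and> u \<noteq> v \<and> e = {u, v})"

definition induced_edges :: "'v set set \<Rightarrow> 'v set \<Rightarrow> 'v set set" where
  "induced_edges E U = {e \<in> E. e \<subseteq> U}"

definition density :: "'v set set \<Rightarrow> 'v set \<Rightarrow> real" where
  "density E U = real (card (induced_edges E U)) / real (card U)"

text \<open>The constructed graph G: a copy of G_B (tagged Inl) plus a clique on n = |V_B|
  new vertices (tagged Inr 0, ..., Inr (n-1)), with all edges between the two parts.\<close>
definition constr_V :: "'a set \<Rightarrow> ('a + nat) set" where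
  "constr_V VB = Inl ` VB \<union> Inr ` {0..<card VB}"

definition constr_E :: "'a set \<Rightarrow> 'a set set \<Rightarrow> ('a + nat) set set" where
  "constr_E VB EB =
     (\<lambda>e. Inl ` e) ` EB
     \<union> {{Inr i, Inr j} | i j. i < card VB \<and> j < card VB \<and> i \<noteq> j}
     \<union> {{Inl b, Inr i} | b i. b \<in> VB \<and> i < card VB}"

definition feasible_2ods :: "'v set \<Rightarrow> real \<Rightarrow> 'v set \<Rightarrow> 'v set \<Rightarrow> bool" where
  "feasible_2ods V \<alpha> V1 V2 \<longleftrightarrow>
     V1 \<subseteq> V \<and> V2 \<subseteq> V \<and> V1 \<noteq> {} \<and> V2 \<noteq> {} \<and> V1 \<noteq> V2 \<and>
     real (card (V1 \<inter> V2)) \<le> \<alpha> * real (card V1) \<and>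
     real (card (V1 \<inter> V2)) \<le> \<alpha> * real (card V2)"

definition cut_edges :: "'v set set \<Rightarrow> 'v set \<Rightarrow> 'v set \<Rightarrow> nat" where
  "cut_edges E A B = card {e \<in> E. \<exists>u\<in>A. \<exists>v\<in>B. e = {u, v}}"

end

theory Submission
  imports Defs
begin

text \<open>
  Write \<open>n = 2k\<close>. Every induced subgraph \<open>G[U]\<close> is complete except for the non-edges of
  \<open>G_B\<close> inside \<open>U \<inter> V_B\<close>, so for \<open>|U| \<le> 3k\<close> its density, scaled by \<open>3k\<close>, is at most
  \<open>3k(|U| - 1)/2\<close> minus the number of those non-edges; a larger \<open>U\<close> is first thinned to \<open>3k\<close>
  vertices without lowering the fraction of pairs that are edges (delete a vertex of
  below-average degree). The two halves of a balanced partition, each together with the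
  whole clique, form a feasible pair attaining the bound. Conversely, given a dense feasible
  pair, counting the parts of the two sets inside \<open>V_B\<close> and inside the clique yields a half
  \<open>H\<close> of \<open>V_B\<close> that is close to the first trace while \<open>V_B - H\<close> is close to the second;
  comparing the non-edges of the halves with those of the traces bounds the cut by \<open>h\<close>.
\<close>

definition pairs_in :: "'v set \<Rightarrow> 'v set set" where
  "pairs_in S = {e. e \<subseteq> S \<and> card e = 2}"

definition non_edges :: "'v set set \<Rightarrow> 'v set \<Rightarrow> 'v set set" where
  "non_edges E S = pairs_in S - E"

lemma finite_pairs_in: "finite S \<Longrightarrow> finite (pairs_in S)"
  unfolding pairs_in_def by (rule finite_subset[of _ "Pow S"]) auto

lemma card_pairs_in: "finite S \<Longrightarrow> card (pairs_in S) = card S choose 2"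
  unfolding pairs_in_def by (rule n_subsets)

lemma pairs_in_mono: "A \<subseteq> B \<Longrightarrow> pairs_in A \<subseteq> pairs_in B"
  unfolding pairs_in_def by auto

lemma card_non_edges_mono:
  "finite B \<Longrightarrow> A \<subseteq> B \<Longrightarrow> card (non_edges E A) \<le> card (non_edges E B)"
  unfolding non_edges_def by (rule card_mono) (auto simp: finite_pairs_in dest: pairs_in_mono)

lemma simple_graph_finite: "simple_graph V E \<Longrightarrow> finite V"
  unfolding simple_graph_def by simp

lemma simple_graph_edge_in_pairs: "simple_graph V E \<Longrightarrow> e \<in> E \<Longrightarrow> e \<in> pairs_in V"
  unfolding simple_graph_def pairs_in_def by auto

lemma card_induced_edges_add_non_edges:
  assumes "simple_graph V E" and "S \<subseteq> V"
  shows "card (induced_edges E S) + card (non_edges E S) = card S choose 2"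
proof -
  have "finite S"
    using assms finite_subset simple_graph_finite by blast
  moreover have "induced_edges E S = pairs_in S \<inter> E"
    using simple_graph_edge_in_pairs[OF assms(1)] unfolding induced_edges_def pairs_in_def by auto
  ultimately show ?thesis
    using card_Int_Diff[of "pairs_in S" E] unfolding non_edges_def
    by (simp add: finite_pairs_in card_pairs_in)
qed

lemma card_non_edges_le_restrict:
  assumes "finite H"
  shows "card (non_edges E H) \<le> card (non_edges E (H \<inter> S)) + card (H - S) * card H"
proof -
  have meeting: "pairs_in H - pairs_in (H \<inter> S) \<subseteq> (\<lambda>(d, x). {d, x}) ` ((H - S) \<times> H)"
  proof
    fix e assume "e \<in> pairs_in H - pairs_in (H \<inter> S)"
    then have "e \<subseteq> H" "card e = 2" "\<not> e \<subseteq> H \<inter> S"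
      unfolding pairs_in_def by auto
    then obtain d x where "e = {d, x}" "d \<in> H - S" "x \<in> H"
      by (auto simp: card_2_iff)
    then show "e \<in> (\<lambda>(d, x). {d, x}) ` ((H - S) \<times> H)" by auto
  qed
  have "non_edges E H \<subseteq> non_edges E (H \<inter> S) \<union> (pairs_in H - pairs_in (H \<inter> S))"
    unfolding non_edges_def using pairs_in_mono[of "H \<inter> S" H] by auto
  then have "card (non_edges E H)
      \<le> card (non_edges E (H \<inter> S) \<union> (pairs_in H - pairs_in (H \<inter> S)))"
    by (rule card_mono[rotated]) (simp add: assms finite_pairs_in non_edges_def)
  also have "\<dots> \<le> card (non_edges E (H \<inter> S)) + card (pairs_in H - pairs_in (H \<inter> S))"
    by (rule card_Un_le)
  also have "card (pairs_in H - pairs_in (H \<inter> S)) \<le> card ((H - S) \<times> H)"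
  proof -
    have "finite ((H - S) \<times> H)" using assms by simp
    then show ?thesis
      using card_mono[OF _ meeting] card_image_le le_trans by blast
  qed
  finally show ?thesis by (simp add: card_cartesian_product)
qed

lemma card_non_edges_le:
  assumes "finite V" and "H \<subseteq> V" and "S \<subseteq> V"
  shows "card (non_edges E H) \<le> card (non_edges E S) + card (H - S) * card H"
proof -
  have "card (non_edges E (H \<inter> S)) \<le> card (non_edges E S)"
    using assms by (intro card_non_edges_mono) (auto intro: finite_subset)
  then show ?thesis
    using card_non_edges_le_restrict[of H E S] assms finite_subset by fastforce
qed

lemma card_edges_eq_induced_add_cut:
  assumes "simple_graph V E" and "H \<subseteq> V"
  shows "card E = card (induced_edges E H) + card (induced_edges E (V - H)) + cut_edges E H (V - H)"
proof -
  define C where "C = {e \<in> E. \<exists>u\<in>H. \<exists>v\<in>V - H. e = {u, v}}"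
  have "E \<subseteq> pairs_in V"
    using simple_graph_edge_in_pairs[OF assms(1)] by blast
  then have "finite E"
    using finite_pairs_in[OF simple_graph_finite[OF assms(1)]] finite_subset by blast
  then have fin: "finite (induced_edges E H)" "finite (induced_edges E (V - H))" "finite C"
    unfolding induced_edges_def C_def by auto
  have split: "E = induced_edges E H \<union> induced_edges E (V - H) \<union> C"
  proof (intro equalityI subsetI)
    fix e assume e: "e \<in> E"
    then obtain u v where "u \<in> V" "v \<in> V" "e = {u, v}"
      using assms(1) unfolding simple_graph_def by blast
    with e show "e \<in> induced_edges E H \<union> induced_edges E (V - H) \<union> C"
      unfolding induced_edges_def C_def by (cases "u \<in> H"; cases "v \<in> H") (auto simp: insert_commute)
  qed (auto simp: induced_edges_def C_def)
  have "card (induced_edges E H \<union> induced_edges E (V - H))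
      = card (induced_edges E H) + card (induced_edges E (V - H))"
    using assms(1) fin unfolding simple_graph_def
    by (intro card_Un_disjoint) (auto simp: induced_edges_def)
  moreover have "card E = card (induced_edges E H \<union> induced_edges E (V - H)) + card C"
    by (subst split, rule card_Un_disjoint) (use fin in \<open>auto simp: induced_edges_def C_def\<close>)
  ultimately show ?thesis unfolding cut_edges_def C_def by simp
qed

lemma real_choose_two: "real (n choose 2) = real n * (real n - 1) / 2"
proof -
  have "even (n * (n - 1))" by auto
  then have "real (2 * (n choose 2)) = real (n * (n - 1))"
    by (simp add: choose_two)
  then show ?thesis by (cases n) (auto simp: of_nat_diff algebra_simps)
qed

definition edge_fraction :: "'v set set \<Rightarrow> 'v set \<Rightarrow> real" where
  "edge_fraction E U = real (card (induced_edges E U)) / real (card U choose 2)"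

lemma finite_induced_edges: "finite U \<Longrightarrow> finite (induced_edges E U)"
  unfolding induced_edges_def by (rule finite_subset[of _ "Pow U"]) auto

lemma sum_card_induced_edges_remove:
  assumes "finite U" and "\<forall>e\<in>E. card e = 2"
  shows "(\<Sum>v\<in>U. card (induced_edges E (U - {v}))) = (card U - 2) * card (induced_edges E U)"
proof -
  let ?I = "induced_edges E U"
  have "(\<Sum>v\<in>U. card (induced_edges E (U - {v}))) = (\<Sum>v\<in>U. \<Sum>e\<in>?I. if v \<in> e then 0 else 1)"
  proof (rule sum.cong[OF refl])
    fix v
    have "induced_edges E (U - {v}) = ?I \<inter> - {e. v \<in> e}"
      unfolding induced_edges_def by auto
    then show "card (induced_edges E (U - {v})) = (\<Sum>e\<in>?I. if v \<in> e then 0 else 1)"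
      using finite_induced_edges[OF assms(1)] by (simp add: sum.If_cases)
  qed
  also have "\<dots> = (\<Sum>e\<in>?I. \<Sum>v\<in>U. if v \<in> e then 0 else 1)"
    by (rule sum.swap)
  also have "\<dots> = (\<Sum>e\<in>?I. card U - 2)"
  proof (rule sum.cong[OF refl])
    fix e assume "e \<in> ?I"
    then have "e \<subseteq> U" "card e = 2"
      using assms(2) unfolding induced_edges_def by auto
    moreover have "U \<inter> - e = U - e" by auto
    ultimately show "(\<Sum>v\<in>U. if v \<in> e then 0 else 1) = card U - 2"
      using assms(1) by (simp add: sum.If_cases card_Diff_subset finite_subset)
  qed
  finally show ?thesis by simp
qed

lemma exists_remove_vertex_card_induced_edges_ge:
  assumes "finite U" and "\<forall>e\<in>E. card e = 2" and "U \<noteq> {}"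
  shows "\<exists>v\<in>U. card (induced_edges E U) * (card U - 2) \<le> card (induced_edges E (U - {v})) * card U"
proof (rule ccontr)
  let ?N = "card U" and ?e = "\<lambda>W. card (induced_edges E W)"
  assume "\<not> ?thesis"
  then have "(\<Sum>v\<in>U. ?e (U - {v}) * ?N) < (\<Sum>v\<in>U. ?e U * (?N - 2))"
    using assms by (intro sum_strict_mono) auto
  then show False
    using sum_card_induced_edges_remove[OF assms(1,2)]
    by (simp add: sum_distrib_left[symmetric] mult.commute)
qed

lemma exists_remove_vertex_edge_fraction_ge:
  assumes "finite U" and "card U \<ge> 3" and "\<forall>e\<in>E. card e = 2"
  shows "\<exists>v\<in>U. edge_fraction E U \<le> edge_fraction E (U - {v})"
proof -
  let ?N = "card U" and ?e = "\<lambda>W. card (induced_edges E W)"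
  obtain v where v: "v \<in> U" and avg: "?e U * (?N - 2) \<le> ?e (U - {v}) * ?N"
    using exists_remove_vertex_card_induced_edges_ge[OF assms(1,3)] assms(2) by fastforce
  define N a b where "N = real ?N" and "a = real (?e U)" and "b = real (?e (U - {v}))"
  have N3: "N \<ge> 3" using assms(2) unfolding N_def by simp
  then have nz: "N \<noteq> 0" "N - 1 \<noteq> 0" "N - 2 \<noteq> 0" by auto
  have ab: "a * (N - 2) \<le> b * N"
  proof -
    have "real (?e U * (?N - 2)) \<le> real (?e (U - {v}) * ?N)"
      using avg by (simp only: of_nat_le_iff)
    then show ?thesis using assms(2) unfolding N_def a_def b_def by (simp add: of_nat_diff)
  qed
  have "edge_fraction E U = a / (N * (N - 1) / 2)"
    unfolding edge_fraction_def real_choose_two a_def N_def ..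
  also have "\<dots> = 2 * (a * (N - 2)) / (N * (N - 1) * (N - 2))"
    using nz by (simp add: divide_simps)
  also have "\<dots> \<le> 2 * (b * N) / (N * (N - 1) * (N - 2))"
    using ab N3 by (intro divide_right_mono) auto
  also have "\<dots> = b / ((N - 1) * (N - 1 - 1) / 2)"
    using nz by (simp add: divide_simps)
  also have "\<dots> = edge_fraction E (U - {v})"
    unfolding edge_fraction_def real_choose_two b_def N_def using v assms(1,2)
    by (simp add: of_nat_diff)
  finally show ?thesis using v by blast
qed

lemma exists_subset_edge_fraction_ge:
  assumes "\<forall>e\<in>E. card e = 2"
  shows "finite U \<Longrightarrow> 2 \<le> s \<Longrightarrow> s \<le> card U \<Longrightarrow>
    \<exists>U'\<subseteq>U. card U' = s \<and> edge_fraction E U \<le> edge_fraction E U'"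
proof (induction "card U - s" arbitrary: U)
  case 0
  then show ?case by (intro exI[of _ U]) auto
next
  case (Suc d)
  have "3 \<le> card U" using Suc.hyps(2) Suc.prems(2) by linarith
  then obtain v where v: "v \<in> U" and "edge_fraction E U \<le> edge_fraction E (U - {v})"
    using exists_remove_vertex_edge_fraction_ge[OF Suc.prems(1) _ assms] by blast
  moreover have "d = card (U - {v}) - s" "s \<le> card (U - {v})"
    using Suc.hyps(2) v Suc.prems(1) by auto
  then obtain U' where "U' \<subseteq> U - {v}" "card U' = s"
      "edge_fraction E (U - {v}) \<le> edge_fraction E U'"
    using Suc.hyps(1) Suc.prems(1,2) by blast
  ultimately show ?case by (intro exI[of _ U']) auto
qed

lemma finite_constr_V: "finite VB \<Longrightarrow> finite (constr_V VB)"
  unfolding constr_V_def by simp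

lemma card_constr_V: "finite VB \<Longrightarrow> card (constr_V VB) = 2 * card VB"
  unfolding constr_V_def by (subst card_Un_disjoint) (auto simp: card_image)

lemma card_eq_card_Inl_vimage_add_card_Inr_vimage:
  fixes U :: "('a + 'b) set"
  assumes "finite U"
  shows "card U = card (Inl -` U) + card (Inr -` U)"
proof -
  have "U = Inl ` (Inl -` U) \<union> Inr ` (Inr -` U)"
  proof (intro equalityI subsetI)
    fix x assume "x \<in> U"
    then show "x \<in> Inl ` (Inl -` U) \<union> Inr ` (Inr -` U)" by (cases x) auto
  qed auto
  then have "card U = card (Inl ` (Inl -` U) \<union> Inr ` (Inr -` U))"
    by (rule arg_cong)
  also have "\<dots> = card (Inl ` (Inl -` U) :: ('a + 'b) set) + card (Inr ` (Inr -` U) :: ('a + 'b) set)"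
    by (rule card_Un_disjoint) (use assms in auto)
  also have "\<dots> = card (Inl -` U) + card (Inr -` U)"
    by (intro arg_cong2[where f = "(+)"] card_image) (auto simp: inj_on_def)
  finally show ?thesis .
qed

lemma constr_E_subset_pairs_minus_non_edges:
  assumes "simple_graph VB EB"
  shows "constr_E VB EB \<subseteq> pairs_in (constr_V VB) - (image Inl) ` non_edges EB VB"
proof
  fix e assume e: "e \<in> constr_E VB EB"
  then consider (base) e' where "e' \<in> EB" "e = Inl ` e'"
    | (clique) i j where "e = {Inr i, Inr j}" "i < card VB" "j < card VB" "i \<noteq> j"
    | (join) b i where "e = {Inl b, Inr i}" "b \<in> VB" "i < card VB"
    unfolding constr_E_def by blast
  then show "e \<in> pairs_in (constr_V VB) - (image Inl) ` non_edges EB VB"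
  proof cases
    case base
    then have "e' \<in> pairs_in VB"
      using simple_graph_edge_in_pairs[OF assms] by blast
    then show ?thesis
      using base unfolding pairs_in_def non_edges_def constr_V_def
      by (auto simp: card_image inj_image_eq_iff)
  qed (auto simp: pairs_in_def constr_V_def)
qed

lemma pairs_minus_non_edges_subset_constr_E:
  "pairs_in (constr_V VB) - (image Inl) ` non_edges EB VB \<subseteq> constr_E VB EB"
proof
  fix e assume e: "e \<in> pairs_in (constr_V VB) - (image Inl) ` non_edges EB VB"
  then obtain u v where uv: "e = {u, v}" "u \<noteq> v" "u \<in> constr_V VB" "v \<in> constr_V VB"
    unfolding pairs_in_def by (auto simp: card_2_iff)
  show "e \<in> constr_E VB EB"
  proof (cases u; cases v)
    fix a b assume "u = Inl a" "v = Inl b"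
    then have img: "e = Inl ` {a, b}" using uv by simp
    moreover have "{a, b} \<in> pairs_in VB"
      using uv \<open>u = Inl a\<close> \<open>v = Inl b\<close> unfolding pairs_in_def constr_V_def by auto
    then have "{a, b} \<in> EB"
      using e img unfolding non_edges_def by blast
    ultimately show ?thesis unfolding constr_E_def by blast
  next
    fix a j assume "u = Inl a" "v = Inr j"
    then have "e = {Inl a, Inr j}" "a \<in> VB" "j < card VB"
      using uv unfolding constr_V_def by auto
    then show ?thesis unfolding constr_E_def by blast
  next
    fix i b assume "u = Inr i" "v = Inl b"
    then have "e = {Inl b, Inr i}" "b \<in> VB" "i < card VB"
      using uv unfolding constr_V_def by auto
    then show ?thesis unfolding constr_E_def by blast
  next
    fix i j assume "u = Inr i" "v = Inr j"
    then have "e = {Inr i, Inr j}" "i < card VB" "j < card VB" "i \<noteq> j"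
      using uv unfolding constr_V_def by auto
    then show ?thesis unfolding constr_E_def by blast
  qed
qed

lemma constr_E_eq_pairs_minus_non_edges:
  "simple_graph VB EB \<Longrightarrow> constr_E VB EB = pairs_in (constr_V VB) - (image Inl) ` non_edges EB VB"
  using constr_E_subset_pairs_minus_non_edges pairs_minus_non_edges_subset_constr_E by blast

lemma Inl_vimage_subset: "U \<subseteq> constr_V VB \<Longrightarrow> Inl -` U \<subseteq> VB"
  unfolding constr_V_def by auto

lemma Inr_vimage_subset: "U \<subseteq> constr_V VB \<Longrightarrow> Inr -` U \<subseteq> {0..<card VB}"
  unfolding constr_V_def by auto

lemma card_induced_edges_constr_E:
  assumes "simple_graph VB EB" and U: "U \<subseteq> constr_V VB"
  shows "card (induced_edges (constr_E VB EB) U) + card (non_edges EB (Inl -` U)) = card U choose 2"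
proof -
  let ?N = "(image Inl) ` non_edges EB (Inl -` U) :: ('a + nat) set set"
  have "finite U"
    using assms(1,2) finite_subset finite_constr_V simple_graph_finite by blast
  have N: "?N \<subseteq> pairs_in U"
    unfolding non_edges_def pairs_in_def by (auto simp: card_image)
  have "induced_edges (constr_E VB EB) U = pairs_in U - ?N"
    using constr_E_eq_pairs_minus_non_edges[OF assms(1)] U Inl_vimage_subset[OF U]
    unfolding induced_edges_def non_edges_def pairs_in_def
    by (auto simp: image_subset_iff_subset_vimage)
  moreover have "card ?N = card (non_edges EB (Inl -` U))"
    by (rule card_image) (auto simp: inj_on_def inj_image_eq_iff)
  ultimately show ?thesis
    using N \<open>finite U\<close> card_mono[OF finite_pairs_in N]
    by (simp add: card_Diff_subset finite_subset[OF N finite_pairs_in] card_pairs_in)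
qed

lemma density_constr_E:
  assumes "simple_graph VB EB" and "U \<subseteq> constr_V VB"
  shows "density (constr_E VB EB) U
    = (real (card U) * (real (card U) - 1) / 2 - real (card (non_edges EB (Inl -` U)))) / real (card U)"
  using arg_cong[OF card_induced_edges_constr_E[OF assms], of real]
  unfolding density_def real_choose_two by (simp add: algebra_simps)

lemma scaled_density_constr_E_le:
  assumes "simple_graph VB EB" and "U \<subseteq> constr_V VB" and "U \<noteq> {}" and "card U \<le> K"
  shows "real K * density (constr_E VB EB) U
    \<le> real K * (real (card U) - 1) / 2 - real (card (non_edges EB (Inl -` U)))"
proof -
  define s N where "s = real (card U)" and "N = real (card (non_edges EB (Inl -` U)))"
  have "finite U"
    using assms(1,2) finite_subset finite_constr_V simple_graph_finite by blast
  then have s: "0 < s" "s \<le> real K"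
    using assms(3,4) unfolding s_def by (auto simp: card_gt_0_iff)
  have "N \<le> real K * N / s"
    using s by (simp add: field_simps N_def mult_right_mono)
  moreover have "real K * density (constr_E VB EB) U = real K * (s - 1) / 2 - real K * N / s"
    unfolding density_constr_E[OF assms(1,2)] s_def[symmetric] N_def[symmetric]
    using s by (simp add: field_simps)
  ultimately show ?thesis unfolding s_def N_def by linarith
qed

lemma scaled_density_constr_E_le_thinned:
  assumes sg: "simple_graph VB EB" and U: "U \<subseteq> constr_V VB" and "2 \<le> K" and "K < card U"
  shows "\<exists>U'\<subseteq>U. card U' = K \<and> real K * density (constr_E VB EB) U
    \<le> real K * (real (card U) - 1) / 2 - real (card (non_edges EB (Inl -` U')))"
proof -
  have "finite U"
    using assms(1,2) finite_subset finite_constr_V simple_graph_finite by blast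
  have "\<forall>e\<in>constr_E VB EB. card e = 2"
    using constr_E_eq_pairs_minus_non_edges[OF sg] unfolding pairs_in_def by auto
  then obtain U' where U': "U' \<subseteq> U" "card U' = K"
    and frac: "edge_fraction (constr_E VB EB) U \<le> edge_fraction (constr_E VB EB) U'"
    using exists_subset_edge_fraction_ge \<open>finite U\<close> assms(3,4) by (metis less_imp_le)
  define s k N where "s = real (card U)" and "k = real K"
    and "N = real (card (non_edges EB (Inl -` U')))"
  have k: "2 \<le> k" "k < s" using assms(3,4) unfolding s_def k_def by auto
  have "real K * density (constr_E VB EB) U = k * (s - 1) / 2 * edge_fraction (constr_E VB EB) U"
    using k unfolding density_def edge_fraction_def real_choose_two s_def k_def
    by (simp add: field_simps)
  also have "\<dots> \<le> k * (s - 1) / 2 * edge_fraction (constr_E VB EB) U'"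
    using k frac by (intro mult_left_mono) auto
  also have "\<dots> = k * (s - 1) / 2 - N * ((s - 1) / (k - 1))"
  proof -
    have "real (card (induced_edges (constr_E VB EB) U')) + N = k * (k - 1) / 2"
      using arg_cong[OF card_induced_edges_constr_E[OF sg order.trans[OF U'(1) U]], of real]
      unfolding real_choose_two U'(2) N_def k_def by simp
    then have ef: "edge_fraction (constr_E VB EB) U' = (k * (k - 1) / 2 - N) / (k * (k - 1) / 2)"
      unfolding edge_fraction_def real_choose_two U'(2) k_def by (simp add: algebra_simps)
    show ?thesis unfolding ef using k by (simp add: field_simps)
  qed
  also have "\<dots> \<le> k * (s - 1) / 2 - N"
  proof -
    have "1 \<le> (s - 1) / (k - 1)" using k by (simp add: field_simps)
    then have "N * 1 \<le> N * ((s - 1) / (k - 1))"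
      unfolding N_def by (intro mult_left_mono) auto
    then show ?thesis by simp
  qed
  finally show ?thesis
    using U' unfolding s_def k_def N_def by blast
qed

lemma scaled_density_constr_E_le_min:
  assumes sg: "simple_graph VB EB" and U: "U \<subseteq> constr_V VB" and "U \<noteq> {}" and "2 \<le> K"
  shows "\<exists>U'\<subseteq>U. card U' = min (card U) K \<and> real K * density (constr_E VB EB) U
    \<le> real K * (real (card U) - 1) / 2 - real (card (non_edges EB (Inl -` U')))"
proof (cases "card U \<le> K")
  case True
  then show ?thesis
    using scaled_density_constr_E_le[OF assms(1-3) True] by (intro exI[of _ U]) auto
next
  case False
  then have "min (card U) K = K" by simp
  with False show ?thesis
    using scaled_density_constr_E_le_thinned[OF assms(1,2,4)] by simp
qed

lemma card_partition_by_pair: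
  assumes "finite V" and "S1 \<subseteq> V" and "S2 \<subseteq> V"
  shows "card (S1 - S2) + card (S2 - S1) + card (S1 \<inter> S2) + card (V - (S1 \<union> S2)) = card V"
proof -
  have fin: "finite S1" "finite S2" using assms finite_subset by auto
  have "card V = card (S1 \<union> S2) + card (V - (S1 \<union> S2))"
    using assms by (simp add: card_Diff_subset card_mono finite_subset)
  moreover have "card (S1 \<union> S2) + card (S1 \<inter> S2) = card S1 + card S2"
    using card_Un_Int[OF fin] by simp
  ultimately show ?thesis
    using card_Int_Diff[OF fin(1), of S2] card_Int_Diff[OF fin(2), of S1] by (simp add: Int_commute)
qed

lemma exists_subset_of_diff_close_to_pair:
  assumes "finite V" and "S1 \<subseteq> V" and "k \<le> card (S1 - S2)"
  shows "\<exists>H\<subseteq>V. card H = k \<and>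
    card (H - S1) + card (V - H - S2) \<le> card (V - (S1 \<union> S2)) + (card (S1 - S2) - k)"
proof -
  obtain H where H: "H \<subseteq> S1 - S2" "card H = k"
    using assms(3) by (meson obtain_subset_with_card_n)
  have "V - S2 = (S1 - S2) \<union> (V - (S1 \<union> S2))" using assms(2) by auto
  then have "card (V - S2) \<le> card (S1 - S2) + card (V - (S1 \<union> S2))"
    using card_Un_le by metis
  moreover have "card (V - H - S2) = card (V - S2) - k"
  proof -
    have "V - H - S2 = (V - S2) - H" by auto
    moreover have "H \<subseteq> V - S2" using H assms(2) by auto
    ultimately show ?thesis
      using H(2) assms(1) card_Diff_subset[of H "V - S2"] finite_subset by fastforce
  qed
  moreover have "H - S1 = {}" using H(1) by blast
  then have "card (H - S1) = 0" by (simp only: card.empty)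
  ultimately show ?thesis
    using H assms(2,3) by (intro exI[of _ H]) auto
qed

lemma exists_superset_of_diff_close_to_pair:
  assumes "finite V" and "card V = 2 * k" and "S1 \<subseteq> V" and "S2 \<subseteq> V"
    and "card (S1 - S2) \<le> k" and "card (S2 - S1) \<le> k"
  shows "\<exists>H\<subseteq>V. card H = k \<and> card (H - S1) + card (V - H - S2) \<le> card (V - (S1 \<union> S2))"
proof -
  let ?W = "V - (S1 - S2) - (S2 - S1)"
  have "card ((S1 - S2) \<union> (S2 - S1)) = card (S1 - S2) + card (S2 - S1)"
    using assms(1,3,4) by (intro card_Un_disjoint) (auto intro: finite_subset)
  moreover have "?W = V - ((S1 - S2) \<union> (S2 - S1))" by auto
  moreover have sub: "(S1 - S2) \<union> (S2 - S1) \<subseteq> V" using assms(3,4) by blast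
  ultimately have "card ?W = 2 * k - (card (S1 - S2) + card (S2 - S1))"
    using card_Diff_subset[OF finite_subset[OF sub assms(1)] sub] assms(2) by simp
  then have "k - card (S1 - S2) \<le> card ?W"
    using assms(5,6) by linarith
  then obtain W where W: "W \<subseteq> ?W" "card W = k - card (S1 - S2)"
    by (meson obtain_subset_with_card_n)
  define H where "H = (S1 - S2) \<union> W"
  have HV: "H \<subseteq> V" using W assms(3) unfolding H_def by blast
  have "card H = k"
    unfolding H_def using W assms(1,3,5) finite_subset[of W V]
    by (subst card_Un_disjoint) (auto intro: finite_subset)
  moreover have "card (H - S1) + card (V - H - S2) = card ((H - S1) \<union> (V - H - S2))"
    using assms(1,3) W by (intro card_Un_disjoint[symmetric]) (auto simp: H_def intro: finite_subset)
  moreover have "card ((H - S1) \<union> (V - H - S2)) \<le> card (V - (S1 \<union> S2))"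
    using W assms by (intro card_mono) (auto simp: H_def)
  ultimately show ?thesis
    using HV by (intro exI[of _ H]) auto
qed

lemma exists_half_close_to_pair:
  assumes "finite V" and "card V = 2 * k" and "S1 \<subseteq> V" and "S2 \<subseteq> V"
  shows "\<exists>H\<subseteq>V. card H = k \<and> card (H - S1) + card (V - H - S2)
    \<le> card (V - (S1 \<union> S2)) + (card (S1 - S2) - k) + (card (S2 - S1) - k)"
proof (cases "k \<le> card (S1 - S2)")
  case True
  then obtain H where "H \<subseteq> V" "card H = k"
    "card (H - S1) + card (V - H - S2) \<le> card (V - (S1 \<union> S2)) + (card (S1 - S2) - k)"
    using exists_subset_of_diff_close_to_pair[OF assms(1,3) True] by blast
  then show ?thesis by (intro exI[of _ H]) auto
next
  case False
  show ?thesis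
  proof (cases "k \<le> card (S2 - S1)")
    case True
    then obtain H where H: "H \<subseteq> V" "card H = k"
      and bound: "card (H - S2) + card (V - H - S1) \<le> card (V - (S2 \<union> S1)) + (card (S2 - S1) - k)"
      using exists_subset_of_diff_close_to_pair[OF assms(1,4) True] by blast
    have "card (V - H) = k"
      using H assms(1,2) by (simp add: card_Diff_subset finite_subset)
    moreover have "V - (V - H) - S2 = H - S2" using H(1) by blast
    ultimately show ?thesis
      using bound by (intro exI[of _ "V - H"]) (auto simp: Un_commute)
  next
    case False
    with \<open>\<not> k \<le> card (S1 - S2)\<close> obtain H where "H \<subseteq> V" "card H = k"
      "card (H - S1) + card (V - H - S2) \<le> card (V - (S1 \<union> S2))"
      using exists_superset_of_diff_close_to_pair[OF assms] by fastforce
    then show ?thesis by (intro exI[of _ H]) auto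
  qed
qed

text \<open>
  Here \<open>p, q, r, z\<close> are the sizes of \<open>S1 - S2\<close>, \<open>S2 - S1\<close>, \<open>S1 \<inter> S2\<close> and of the rest of \<open>V_B\<close>
  for the traces \<open>S\<^sub>i\<close> of two vertex sets on \<open>V_B\<close>, while \<open>a1, a2, c\<close> are the sizes of their parts
  in the clique and of the intersection of these parts.
\<close>

lemma half_defect_arith:
  fixes k p q r z a1 a2 c s1 :: nat
  assumes "p + q + r + z = 2 * k" and "a1 \<le> 2 * k" and "a2 \<le> 2 * k" and "a1 + a2 \<le> 2 * k + c"
    and "3 * (c + r) \<le> 2 * (a1 + p + r)" and "3 * (c + r) \<le> 2 * (a2 + q + r)"
    and "a2 + q \<le> a1 + p" and "a1 + p + r \<le> 3 * k"
    and "s1 = a1 + p + r \<or> (a1 + p + r = 3 * k \<and> a2 + q + r + 3 * s1 \<le> 12 * k)"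
  shows "2 * (z + (p - k) + (q - k)) + 3 * (s1 + (a2 + q + r)) \<le> 18 * k"
  using assms(9)
proof (elim disjE conjE)
  assume "s1 = a1 + p + r"
  then show ?thesis using assms(1-8) by (cases "k \<le> p"; cases "k \<le> q") auto
next
  assume "a1 + p + r = 3 * k" "a2 + q + r + 3 * s1 \<le> 12 * k"
  then show ?thesis using assms(1-8) by (cases "k \<le> p"; cases "k \<le> q") auto
qed

text \<open>
  \<open>U1\<close> may have been thinned from a set of size \<open>s1 > 3k\<close>; the last hypothesis records what the
  feasibility of the original pair still gives in that case.
\<close>

lemma exists_half_small_defect:
  assumes fin: "finite VB" and n: "card VB = 2 * k"
    and U1: "U1 \<subseteq> constr_V VB" and U2: "U2 \<subseteq> constr_V VB"
    and "3 * card (U1 \<inter> U2) \<le> 2 * card U1" and "3 * card (U1 \<inter> U2) \<le> 2 * card U2"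
    and "card U2 \<le> card U1" and "card U1 \<le> 3 * k"
    and "s1 = card U1 \<or> (card U1 = 3 * k \<and> card U2 + 3 * s1 \<le> 12 * k)"
  shows "\<exists>H\<subseteq>VB. card H = k \<and>
    2 * (card (H - Inl -` U1) + card (VB - H - Inl -` U2)) + 3 * (s1 + card U2) \<le> 18 * k"
proof -
  define S1 S2 A1 A2 where "S1 = Inl -` U1" and "S2 = Inl -` U2"
    and "A1 = Inr -` U1" and "A2 = Inr -` U2"
  have S: "S1 \<subseteq> VB" "S2 \<subseteq> VB"
    unfolding S1_def S2_def using Inl_vimage_subset U1 U2 by auto
  have A: "A1 \<subseteq> {0..<2 * k}" "A2 \<subseteq> {0..<2 * k}"
    unfolding A1_def A2_def using Inr_vimage_subset U1 U2 n by metis+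
  have finS: "finite S1" "finite S2" using S fin finite_subset by auto
  have finA: "finite A1" "finite A2" using A finite_subset by auto
  have finU: "finite U1" "finite U2"
    using U1 U2 finite_constr_V[OF fin] finite_subset by auto
  have cU1: "card U1 = card A1 + card (S1 - S2) + card (S1 \<inter> S2)"
    using card_eq_card_Inl_vimage_add_card_Inr_vimage[OF finU(1)] card_Int_Diff[OF finS(1), of S2]
    unfolding S1_def A1_def by simp
  have cU2: "card U2 = card A2 + card (S2 - S1) + card (S1 \<inter> S2)"
    using card_eq_card_Inl_vimage_add_card_Inr_vimage[OF finU(2)] card_Int_Diff[OF finS(2), of S1]
    unfolding S2_def A2_def by (simp add: Int_commute)
  have cI: "card (U1 \<inter> U2) = card (A1 \<inter> A2) + card (S1 \<inter> S2)"
    using card_eq_card_Inl_vimage_add_card_Inr_vimage[of "U1 \<inter> U2"] finU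
    unfolding S1_def S2_def A1_def A2_def by (simp add: vimage_Int)
  note partition = card_partition_by_pair[OF fin S, unfolded n]
  have "card (A1 \<union> A2) \<le> 2 * k"
    using card_mono[of "{0..<2 * k}" "A1 \<union> A2"] A by simp
  then have clique: "card A1 + card A2 \<le> 2 * k + card (A1 \<inter> A2)" "card A1 \<le> 2 * k" "card A2 \<le> 2 * k"
    using card_Un_Int[OF finA] card_mono[OF _ A(1)] card_mono[OF _ A(2)] by auto
  obtain H where "H \<subseteq> VB" "card H = k"
    and "card (H - S1) + card (VB - H - S2)
      \<le> card (VB - (S1 \<union> S2)) + (card (S1 - S2) - k) + (card (S2 - S1) - k)"
    using exists_half_close_to_pair[OF fin n S] by blast
  moreover have "2 * (card (VB - (S1 \<union> S2)) + (card (S1 - S2) - k) + (card (S2 - S1) - k))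
      + 3 * (s1 + card U2) \<le> 18 * k"
    using half_defect_arith[OF partition clique(2,3,1)] assms(5-9) cU1 cU2 cI
    by (simp add: add.assoc)
  ultimately show ?thesis
    unfolding S1_def S2_def by (intro exI[of _ H]) auto
qed

lemma card_Inl_image_Un_clique:
  assumes "finite VB" and "VB' \<subseteq> VB"
  shows "card (Inl ` VB' \<union> Inr ` {0..<card VB} :: ('a + nat) set) = card VB' + card VB"
  using assms by (subst card_Un_disjoint) (auto simp: card_image finite_subset)

lemma feasible_halves_with_clique:
  assumes "finite VB" and "VB1 \<union> VB2 = VB" and "VB1 \<inter> VB2 = {}" and "VB1 \<noteq> {}"
    and "card VB1 = card VB2"
  shows "feasible_2ods (constr_V VB) (2/3)
      (Inl ` VB1 \<union> Inr ` {0..<card VB}) (Inl ` VB2 \<union> Inr ` {0..<card VB})"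
proof -
  let ?C = "Inr ` {0..<card VB} :: ('a + nat) set"
  have n: "card VB = 2 * card VB1"
    using assms card_Un_disjoint[of VB1 VB2] by (metis finite_Un mult_2)
  have "(Inl ` VB1 \<union> ?C) \<inter> (Inl ` VB2 \<union> ?C) = ?C"
    using assms(3) by auto
  then have "card ((Inl ` VB1 \<union> ?C) \<inter> (Inl ` VB2 \<union> ?C)) = 2 * card VB1"
    using n by (simp add: card_image)
  moreover have "card (Inl ` VB1 \<union> ?C) = 3 * card VB1" "card (Inl ` VB2 \<union> ?C) = 3 * card VB1"
    using card_Inl_image_Un_clique[OF assms(1)] assms(2,5) n by auto
  moreover obtain b where "b \<in> VB1" using assms(4) by auto
  then have "Inl b \<in> (Inl ` VB1 \<union> ?C) - (Inl ` VB2 \<union> ?C)"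
    using assms(3) by auto
  moreover have "0 < card VB1"
    using assms(1,2,4) by (auto simp: card_gt_0_iff)
  ultimately show ?thesis
    using assms(2) unfolding feasible_2ods_def constr_V_def by auto
qed

lemma density_halves_with_clique:
  assumes sg: "simple_graph VB EB" and "VB1 \<union> VB2 = VB" and "VB1 \<inter> VB2 = {}" and "VB1 \<noteq> {}"
    and "card VB1 = card VB2"
  shows "density (constr_E VB EB) (Inl ` VB1 \<union> Inr ` {0..<card VB})
      + density (constr_E VB EB) (Inl ` VB2 \<union> Inr ` {0..<card VB})
    = (2 * real (card VB)^2 - real (card VB) + real (card EB) - real (cut_edges EB VB1 VB2))
      / (3/2 * real (card VB))"
proof -
  let ?C = "Inr ` {0..<card VB} :: ('a + nat) set"
  have fin: "finite VB" using simple_graph_finite[OF sg] .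
  define k where "k = real (card VB1)"
  have "finite VB1" "finite VB2" using fin assms(2) by auto
  then have n: "real (card VB) = 2 * k"
    using assms(2,3,5) card_Un_disjoint[of VB1 VB2] unfolding k_def by simp
  have k: "k > 0" using assms(4) fin assms(2) unfolding k_def by (auto simp: card_gt_0_iff)
  have dens: "density (constr_E VB EB) (Inl ` VBi \<union> ?C)
      = (3 * k * (3 * k - 1) / 2 - real (card (non_edges EB VBi))) / (3 * k)"
    if "VBi \<subseteq> VB" "card VBi = card VB1" for VBi
  proof -
    have "Inl ` VBi \<union> ?C \<subseteq> constr_V VB" "Inl -` (Inl ` VBi \<union> ?C) = VBi"
      using that unfolding constr_V_def by auto
    moreover have "real (card (Inl ` VBi \<union> ?C)) = 3 * k"
      using card_Inl_image_Un_clique[OF fin that(1)] that(2) n unfolding k_def by simp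
    ultimately show ?thesis
      using density_constr_E[OF sg] by simp
  qed
  have ne: "real (card (non_edges EB VBi)) = k * (k - 1) / 2 - real (card (induced_edges EB VBi))"
    if "VBi \<subseteq> VB" "card VBi = card VB1" for VBi
    using arg_cong[OF card_induced_edges_add_non_edges[OF sg that(1)], of real] that(2)
    unfolding real_choose_two k_def by simp
  have "VB1 \<subseteq> VB" "VB - VB1 = VB2" using assms(2,3) by auto
  then have "real (card EB) = real (card (induced_edges EB VB1)) + real (card (induced_edges EB VB2))
      + real (cut_edges EB VB1 VB2)"
    using card_edges_eq_induced_add_cut[OF sg, of VB1] by simp
  then show ?thesis
    using dens[of VB1] dens[of VB2] ne[of VB1] ne[of VB2] assms(2,5) n k
    by (auto simp: field_simps power2_eq_square)
qed

lemma cut_edges_le_of_small_defect: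
  fixes d1 d2 :: real
  assumes sg: "simple_graph VB EB" and n: "card VB = 2 * k" and "0 < k"
    and H: "H \<subseteq> VB" "card H = k" and S: "S1 \<subseteq> VB" "S2 \<subseteq> VB"
    and d1: "3 * real k * d1 \<le> 3 * real k * (real s1 - 1) / 2 - real (card (non_edges EB S1))"
    and d2: "3 * real k * d2 \<le> 3 * real k * (real s2 - 1) / 2 - real (card (non_edges EB S2))"
    and target: "(2 * real (card VB)^2 - real (card VB) + real (card EB) - real h)
      / (3/2 * real (card VB)) \<le> d1 + d2"
    and defect: "2 * (card (H - S1) + card (VB - H - S2)) + 3 * (s1 + s2) \<le> 18 * k"
  shows "cut_edges EB H (VB - H) \<le> h"
proof -
  have fin: "finite VB" using simple_graph_finite[OF sg] .
  define R where "R = real k"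
  have R: "0 < R" using assms(3) unfolding R_def by simp
  have "card (VB - H) = k" using H fin n by (simp add: card_Diff_subset finite_subset)
  have non_edges_half: "real (card (non_edges EB H')) = R * (R - 1) / 2 - real (card (induced_edges EB H'))"
    if "H' \<subseteq> VB" "card H' = k" for H'
    using arg_cong[OF card_induced_edges_add_non_edges[OF sg that(1)], of real] that(2)
    unfolding real_choose_two R_def by simp
  have "card (non_edges EB H) \<le> card (non_edges EB S1) + card (H - S1) * k"
    using card_non_edges_le[OF fin H(1) S(1)] H(2) by simp
  then have "real (card (non_edges EB H)) \<le> real (card (non_edges EB S1)) + real (card (H - S1)) * R"
    unfolding R_def by (metis of_nat_add of_nat_le_iff of_nat_mult)
  moreover have "card (non_edges EB (VB - H)) \<le> card (non_edges EB S2) + card (VB - H - S2) * k"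
    using card_non_edges_le[OF fin _ S(2), of "VB - H"] \<open>card (VB - H) = k\<close> by simp
  then have "real (card (non_edges EB (VB - H)))
      \<le> real (card (non_edges EB S2)) + real (card (VB - H - S2)) * R"
    unfolding R_def by (metis of_nat_add of_nat_le_iff of_nat_mult)
  moreover have "real (card EB) = real (card (induced_edges EB H)) + real (card (induced_edges EB (VB - H)))
      + real (cut_edges EB H (VB - H))"
    using card_edges_eq_induced_add_cut[OF sg H(1)] by simp
  moreover have "8 * R * R - 2 * R + real (card EB) - real h \<le> 3 * R * d1 + 3 * R * d2"
    using target R n unfolding R_def by (simp add: divide_le_eq algebra_simps power2_eq_square)
  moreover have "R * (2 * real (card (H - S1) + card (VB - H - S2)) + 3 * (real s1 + real s2)) \<le> R * (18 * R)"
    using defect R unfolding R_def by (intro mult_left_mono) (simp_all only: of_nat_le_iff[symmetric], simp)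
  ultimately have "real (cut_edges EB H (VB - H)) \<le> real h"
    using d1 d2 non_edges_half[OF H] non_edges_half[of "VB - H"] \<open>card (VB - H) = k\<close>
    unfolding R_def[symmetric] by (simp add: algebra_simps)
  then show ?thesis by simp
qed

lemma feasible_2ods_constr_V_card_le:
  assumes "finite VB" and "feasible_2ods (constr_V VB) (2/3) V1 V2"
  shows "3 * card (V1 \<inter> V2) \<le> 2 * card V1" and "3 * card (V1 \<inter> V2) \<le> 2 * card V2"
    and "card V1 + card V2 \<le> 2 * card VB + card (V1 \<inter> V2)"
proof -
  have V: "V1 \<subseteq> constr_V VB" "V2 \<subseteq> constr_V VB"
    using assms(2) unfolding feasible_2ods_def by auto
  show "3 * card (V1 \<inter> V2) \<le> 2 * card V1" "3 * card (V1 \<inter> V2) \<le> 2 * card V2"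
    using assms(2) unfolding feasible_2ods_def by linarith+
  have "card (V1 \<union> V2) \<le> 2 * card VB"
    using card_mono[OF finite_constr_V[OF assms(1)], of "V1 \<union> V2"] V card_constr_V[OF assms(1)] by simp
  then show "card V1 + card V2 \<le> 2 * card VB + card (V1 \<inter> V2)"
    using card_Un_Int[of V1 V2] V finite_subset[OF _ finite_constr_V[OF assms(1)]] by fastforce
qed

lemma exists_balanced_cut_of_dense_pair_ordered:
  assumes sg: "simple_graph VB EB" and "even (card VB)"
    and fe: "feasible_2ods (constr_V VB) (2/3) V1 V2" and ord: "card V2 \<le> card V1"
    and target: "(2 * real (card VB)^2 - real (card VB) + real (card EB) - real h)
      / (3/2 * real (card VB)) \<le> density (constr_E VB EB) V1 + density (constr_E VB EB) V2"
  shows "\<exists>H\<subseteq>VB. 0 < card H \<and> 2 * card H = card VB \<and> cut_edges EB H (VB - H) \<le> h"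
proof -
  have fin: "finite VB" using simple_graph_finite[OF sg] .
  have V: "V1 \<subseteq> constr_V VB" "V2 \<subseteq> constr_V VB" "V1 \<noteq> {}" "V2 \<noteq> {}"
    using fe unfolding feasible_2ods_def by auto
  obtain k where n: "card VB = 2 * k" using assms(2) by (rule evenE)
  have J: "3 * card (V1 \<inter> V2) \<le> 2 * card V1" "3 * card (V1 \<inter> V2) \<le> 2 * card V2"
    and union: "card V1 + card V2 \<le> 4 * k + card (V1 \<inter> V2)"
    using feasible_2ods_constr_V_card_le[OF fin fe] n by auto
  have "VB \<noteq> {}" using V(1,3) unfolding constr_V_def by auto
  then have "0 < card VB" using fin by (simp add: card_gt_0_iff)
  then have k: "0 < k" using n by simp
  have "2 \<le> 3 * k" using k by simp
  \<comment> \<open>only the larger set can have more than \<open>3k\<close> vertices\<close>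
  then obtain U1 where U1: "U1 \<subseteq> V1" "card U1 = min (card V1) (3 * k)"
    and d1: "real (3 * k) * density (constr_E VB EB) V1
      \<le> real (3 * k) * (real (card V1) - 1) / 2 - real (card (non_edges EB (Inl -` U1)))"
    using scaled_density_constr_E_le_min[OF sg V(1,3)] by blast
  have "card V2 \<le> 3 * k" using J ord union by linarith
  then have d2: "real (3 * k) * density (constr_E VB EB) V2
      \<le> real (3 * k) * (real (card V2) - 1) / 2 - real (card (non_edges EB (Inl -` V2)))"
    by (rule scaled_density_constr_E_le[OF sg V(2,4)])
  have "card (U1 \<inter> V2) \<le> card (V1 \<inter> V2)"
    using U1(1) V(1) finite_subset[OF _ finite_constr_V[OF fin]] by (intro card_mono) auto
  then have "3 * card (U1 \<inter> V2) \<le> 2 * card U1" "3 * card (U1 \<inter> V2) \<le> 2 * card V2"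
    "card V2 \<le> card U1" "card U1 \<le> 3 * k"
    "card V1 = card U1 \<or> (card U1 = 3 * k \<and> card V2 + 3 * card V1 \<le> 12 * k)"
    using U1(2) J ord union unfolding min_def by (auto split: if_splits)
  then obtain H where H: "H \<subseteq> VB" "card H = k"
    and defect: "2 * (card (H - Inl -` U1) + card (VB - H - Inl -` V2)) + 3 * (card V1 + card V2) \<le> 18 * k"
    using exists_half_small_defect[OF fin n order.trans[OF U1(1) V(1)] V(2)] by blast
  have "Inl -` U1 \<subseteq> VB" "Inl -` V2 \<subseteq> VB"
    using Inl_vimage_subset U1(1) V(1,2) by blast+
  from cut_edges_le_of_small_defect[OF sg n k H this _ _ target defect] d1 d2
  have "cut_edges EB H (VB - H) \<le> h" by simp
  then show ?thesis using H k n by (intro exI[of _ H]) auto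
qed

lemma feasible_2ods_commute: "feasible_2ods V \<alpha> V1 V2 \<longleftrightarrow> feasible_2ods V \<alpha> V2 V1"
  unfolding feasible_2ods_def by (auto simp: Int_commute)

lemma exists_balanced_cut_of_dense_pair:
  assumes "simple_graph VB EB" and "even (card VB)"
    and "feasible_2ods (constr_V VB) (2/3) V1 V2"
    and "(2 * real (card VB)^2 - real (card VB) + real (card EB) - real h)
      / (3/2 * real (card VB)) \<le> density (constr_E VB EB) V1 + density (constr_E VB EB) V2"
  shows "\<exists>H\<subseteq>VB. 0 < card H \<and> 2 * card H = card VB \<and> cut_edges EB H (VB - H) \<le> h"
  using exists_balanced_cut_of_dense_pair_ordered[OF assms(1,2), of V1 V2]
    exists_balanced_cut_of_dense_pair_ordered[OF assms(1,2), of V2 V1] assms(3,4)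
  by (cases "card V2 \<le> card V1") (auto simp: feasible_2ods_commute add.commute)

lemma dense_feasible_pair_of_balanced_cut:
  assumes "simple_graph VB EB" and "VB1 \<union> VB2 = VB" and "VB1 \<inter> VB2 = {}" and "VB1 \<noteq> {}"
    and "card VB1 = card VB2" and "cut_edges EB VB1 VB2 \<le> h"
  shows "\<exists>V1 V2. feasible_2ods (constr_V VB) (2/3) V1 V2 \<and>
    (2 * real (card VB)^2 - real (card VB) + real (card EB) - real h)
      / (3/2 * real (card VB)) \<le> density (constr_E VB EB) V1 + density (constr_E VB EB) V2"
proof (intro exI conjI)
  show "feasible_2ods (constr_V VB) (2/3)
      (Inl ` VB1 \<union> Inr ` {0..<card VB}) (Inl ` VB2 \<union> Inr ` {0..<card VB})"
    using feasible_halves_with_clique[OF simple_graph_finite[OF assms(1)] assms(2-5)] .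
  show "(2 * real (card VB)^2 - real (card VB) + real (card EB) - real h) / (3/2 * real (card VB))
      \<le> density (constr_E VB EB) (Inl ` VB1 \<union> Inr ` {0..<card VB})
        + density (constr_E VB EB) (Inl ` VB2 \<union> Inr ` {0..<card VB})"
    unfolding density_halves_with_clique[OF assms(1-5)]
    using assms(6) by (intro divide_right_mono) auto
qed

theorem theorem21:
  fixes VB :: "'a set" and EB :: "'a set set" and h :: nat
  assumes "simple_graph VB EB"
    and "even (card VB)"
  shows "(\<exists>VB1 VB2. VB1 \<union> VB2 = VB \<and> VB1 \<inter> VB2 = {} \<and> VB1 \<noteq> {} \<and> VB2 \<noteq> {} \<and>
            card VB1 = card VB2 \<and> cut_edges EB VB1 VB2 \<le> h)
     \<longleftrightarrow>
     (\<exists>V1 V2. feasible_2ods (constr_V VB) (2/3) V1 V2 \<and>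
        density (constr_E VB EB) V1 + density (constr_E VB EB) V2
          \<ge> (2 * real (card VB)^2 - real (card VB) + real (card EB) - real h)
              / (3/2 * real (card VB)))"
    (is "?partition \<longleftrightarrow> ?dense_pair")
proof
  assume ?partition
  then show ?dense_pair
    using dense_feasible_pair_of_balanced_cut[OF assms(1)] by blast
next
  assume ?dense_pair
  then obtain H where H: "H \<subseteq> VB" "0 < card H" "2 * card H = card VB"
    and "cut_edges EB H (VB - H) \<le> h"
    using exists_balanced_cut_of_dense_pair[OF assms] by blast
  moreover have "card (VB - H) = card H"
    using H simple_graph_finite[OF assms(1)] by (simp add: card_Diff_subset finite_subset)
  ultimately show ?partition
    by (intro exI[of _ H] exI[of _ "VB - H"]) auto
qed

end
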